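(* Let $n\geq 3$, $k\in\mathbb{Z}_n$ with $k\neq 0$ and $2k\not\equiv 0\pmod n$, and let $b\in\{1,2,3\}$. Let $C$ be a $(1,b)$-regular set of $\mathrm{GP}(n,k)$. Then $$|E(C)\cap E(U)|=|E(C)\cap E(V)|\quad\text{and}\quad 2|E(C)\cap E(U)|+|E(C)\cap E(U,V)|=\frac{bn}{2+b}.$$
   Context: For an integer $n\geq 3$ and a nonzero $k\in\mathbb{Z}_n$, the generalized Petersen graph $\mathrm{GP}(n,k)$ is the simple graph with vertex set $\{u_i,v_i\mid i\in\mathbb{Z}_n\}$ and edges $u_iu_{i+1}$, $u_iv_i$, $v_iv_{i+k}$ for all $i\in\mathbb{Z}_n$ (indices modulo $n$); with $2k\not\equiv0\pmod n$ it is 3-regular. Let $U=\{u_i\mid i\in\mathbb{Z}_n\}$ and $V=\{v_i\mid i\in\mathbb{Z}_n\}$. For subsets $A,B$ of vertices, $E(A,B)$ denotes the set of edges with one end in $A$ and the other in $B$, and $E(A)=E(A,A)$ is the set of edges with both ends in $A$. For nonnegative integers $a,b$, a set $C$ of vertices of a graph $\Gamma$ is an $(a,b)$-regular set if the subgraph induced by $C$ is $a$-regular and every vertex of $V(\Gamma)\setminus C$ is adjacent to exactly $b$ vertices of $C$. *)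

theory Defs
  imports Complex_Main
begin

text \<open>Vertices of GP(n,k): outer vertices u_i and inner vertices v_i, indices i in {0..<n}
  representing Z_n.\<close>
datatype gpv = U nat | V nat

definition gp_verts :: "nat \<Rightarrow> gpv set" where
  "gp_verts n = U ` {0..<n} \<union> V ` {0..<n}"

definition outer :: "nat \<Rightarrow> gpv set" where
  "outer n = U ` {0..<n}"

definition inner :: "nat \<Rightarrow> gpv set" where
  "inner n = V ` {0..<n}"

definition gp_edges :: "nat \<Rightarrow> nat \<Rightarrow> gpv set set" where
  "gp_edges n k =
     (\<lambda>i. {U i, U ((i + 1) mod n)}) ` {0..<n}
   \<union> (\<lambda>i. {U i, V i}) ` {0..<n}
   \<union> (\<lambda>i. {V i, V ((i + k) mod n)}) ` {0..<n}"

definition gp_adj :: "nat \<Rightarrow> nat \<Rightarrow> gpv \<Rightarrow> gpv \<Rightarrow> bool" where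
  "gp_adj n k x y \<longleftrightarrow> {x, y} \<in> gp_edges n k \<and> x \<noteq> y"

definition edges_between :: "nat \<Rightarrow> nat \<Rightarrow> gpv set \<Rightarrow> gpv set \<Rightarrow> gpv set set" where
  "edges_between n k A B =
     {e \<in> gp_edges n k. \<exists>x y. e = {x, y} \<and> x \<in> A \<and> y \<in> B}"

definition edges_in :: "nat \<Rightarrow> nat \<Rightarrow> gpv set \<Rightarrow> gpv set set" where
  "edges_in n k A = edges_between n k A A"

definition regular_set :: "nat \<Rightarrow> nat \<Rightarrow> nat \<Rightarrow> nat \<Rightarrow> gpv set \<Rightarrow> bool" where
  "regular_set n k a b C \<longleftrightarrow> C \<subseteq> gp_verts n \<and>
     (\<forall>x\<in>C. card {y \<in> C. gp_adj n k x y} = a) \<and>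
     (\<forall>x\<in>gp_verts n - C. card {y \<in> C. gp_adj n k x y} = b)"

end

theory Submission
  imports Defs
begin

text \<open>Let A = |C \<inter> U| and B = |C \<inter> V|. Summing over the outer vertices the number of
  their neighbours in C (1 inside C, b outside) gives A + b(n - A) = 2A + B, because a vertex
  of C \<inter> U is adjacent to two outer vertices and a vertex of C \<inter> V to one;
  symmetrically B + b(n - B) = 2B + A. Hence b(A - B) = 0, so A = B as b > 0, and
  bn = (2 + b)A. Summing instead only over the outer vertices in C, each of which has exactly
  one neighbour in C, counts every edge of E(C) \<inter> E(U) twice and every edge of
  E(C) \<inter> E(U,V) once: A = 2|E(C) \<inter> E(U)| + |E(C) \<inter> E(U,V)|, and likewise
  B = 2|E(C) \<inter> E(V)| + |E(C) \<inter> E(U,V)|.\<close>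

lemma mod_less_twice:
  fixes a n :: nat
  assumes "a < 2 * n" shows "a mod n = (if a < n then a else a - n)"
  using assms by (simp add: le_mod_geq)

lemma mod_add_sub_cancel:
  fixes c n j :: nat
  assumes "c \<le> n" "j < n"
  shows "((j + c) mod n + (n - c)) mod n = j"
proof -
  have "((j + c) mod n + (n - c)) mod n = (j + c + (n - c)) mod n"
    by (rule mod_add_left_eq)
  also have "j + c + (n - c) = j + n" using assms(1) by simp
  finally show ?thesis using assms(2) by simp
qed

lemma mod_shift_eq_iff:
  fixes c n i j :: nat
  assumes "c \<le> n" "i < n" "j < n"
  shows "i = (j + c) mod n \<longleftrightarrow> j = (i + (n - c)) mod n"
  using mod_add_sub_cancel[of c n] mod_add_sub_cancel[of "n - c" n] assms by auto

lemma bij_betw_mod_shift: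
  fixes c n :: nat
  assumes "c \<le> n"
  shows "bij_betw (\<lambda>i. (i + c) mod n) {..<n} {..<n}"
proof (rule bij_betw_byWitness[where f' = "\<lambda>i. (i + (n - c)) mod n"])
  have "((j + (n - c)) mod n + c) mod n = j" if "j < n" for j
    using mod_add_sub_cancel[of "n - c" n j] assms that by simp
  then show "\<forall>j\<in>{..<n}. ((j + (n - c)) mod n + c) mod n = j" by simp
qed (use mod_add_sub_cancel[OF assms] in auto)

lemma sum_mod_shift:
  fixes c n :: nat
  assumes "c \<le> n"
  shows "(\<Sum>i<n. h ((i + c) mod n)) = (\<Sum>i<n. h i)"
  using sum.reindex_bij_betw[OF bij_betw_mod_shift[OF assms]] .

lemma mod_shift_neq:
  fixes c n i :: nat
  assumes "i < n" "0 < c" "c < n" shows "(i + c) mod n \<noteq> i"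
  using assms by (simp add: mod_less_twice) linarith

lemma mod_shift_neq_opposite:
  fixes c n i :: nat
  assumes "i < n" "c < n" "(2 * c) mod n \<noteq> 0"
  shows "(i + c) mod n \<noteq> (i + (n - c)) mod n"
proof -
  have "0 < c" "2 * c \<noteq> n" using assms(3) by (auto intro: Nat.gr0I)
  then show ?thesis using assms(1,2) by (simp add: mod_less_twice) arith
qed

lemma doubleton_mem_cycle_edges_iff:
  fixes c n i :: nat
  assumes "inj F" "c \<le> n" "i < n"
  shows "{F i, y} \<in> (\<lambda>j. {F j, F ((j + c) mod n)}) ` {0..<n}
           \<longleftrightarrow> y = F ((i + c) mod n) \<or> y = F ((i + (n - c)) mod n)"
proof -
  have "{F i, y} \<in> (\<lambda>j. {F j, F ((j + c) mod n)}) ` {0..<n}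
          \<longleftrightarrow> (\<exists>j<n. (j = i \<and> y = F ((j + c) mod n)) \<or> (i = (j + c) mod n \<and> y = F j))"
    by (auto simp: doubleton_eq_iff inj_eq[OF assms(1)])
  also have "\<dots> \<longleftrightarrow> (\<exists>j<n. (j = i \<and> y = F ((j + c) mod n)) \<or> (j = (i + (n - c)) mod n \<and> y = F j))"
    using mod_shift_eq_iff[OF assms(2,3)] by blast
  also have "\<dots> \<longleftrightarrow> y = F ((i + c) mod n) \<or> y = F ((i + (n - c)) mod n)"
    using assms(3) mod_less_divisor[of n "i + (n - c)"] by (metis gr_zeroI not_less_zero)
  finally show ?thesis .
qed

lemma gp_adj_U_iff:
  assumes "2 \<le> n" "i < n"
  shows "gp_adj n k (U i) y \<longleftrightarrow> y \<in> {U ((i + 1) mod n), U ((i + (n - 1)) mod n), V i}"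
proof -
  have "{U i, y} \<in> (\<lambda>j. {U j, U ((j + 1) mod n)}) ` {0..<n}
          \<longleftrightarrow> y = U ((i + 1) mod n) \<or> y = U ((i + (n - 1)) mod n)"
    using assms by (intro doubleton_mem_cycle_edges_iff) (auto simp: inj_def)
  moreover have "{U i, y} \<in> (\<lambda>j. {U j, V j}) ` {0..<n} \<longleftrightarrow> y = V i"
    using assms(2) by (auto simp: doubleton_eq_iff)
  moreover have "{U i, y} \<notin> (\<lambda>j. {V j, V ((j + k) mod n)}) ` {0..<n}"
    by auto
  moreover have "(i + 1) mod n \<noteq> i" "(i + (n - 1)) mod n \<noteq> i"
    using mod_shift_neq[of i n 1] mod_shift_neq[of i n "n - 1"] assms by auto
  ultimately show ?thesis unfolding gp_adj_def gp_edges_def by auto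
qed

lemma gp_adj_V_iff:
  assumes "0 < k" "k < n" "i < n"
  shows "gp_adj n k (V i) y \<longleftrightarrow> y \<in> {V ((i + k) mod n), V ((i + (n - k)) mod n), U i}"
proof -
  have "{V i, y} \<in> (\<lambda>j. {V j, V ((j + k) mod n)}) ` {0..<n}
          \<longleftrightarrow> y = V ((i + k) mod n) \<or> y = V ((i + (n - k)) mod n)"
    using assms by (intro doubleton_mem_cycle_edges_iff) (auto simp: inj_def)
  moreover have "{V i, y} \<in> (\<lambda>j. {U j, V j}) ` {0..<n} \<longleftrightarrow> y = U i"
    using assms(3) by (auto simp: doubleton_eq_iff)
  moreover have "{V i, y} \<notin> (\<lambda>j. {U j, U ((j + 1) mod n)}) ` {0..<n}"
    by auto
  moreover have "(i + k) mod n \<noteq> i" "(i + (n - k)) mod n \<noteq> i"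
    using mod_shift_neq[of i n k] mod_shift_neq[of i n "n - k"] assms by auto
  ultimately show ?thesis unfolding gp_adj_def gp_edges_def by auto
qed

lemma card_three_Int:
  assumes "x \<noteq> y" "x \<noteq> z" "y \<noteq> z"
  shows "int (card ({x, y, z} \<inter> C)) = of_bool (x \<in> C) + of_bool (y \<in> C) + of_bool (z \<in> C)"
  using assms by (cases "x \<in> C"; cases "y \<in> C"; cases "z \<in> C") (auto simp: Int_insert_left)

lemma regular_set_neighbours_U:
  assumes "regular_set n k a b C" "3 \<le> n" "i < n"
  shows "(if U i \<in> C then int a else int b)
           = of_bool (U ((i + 1) mod n) \<in> C) + of_bool (U ((i + (n - 1)) mod n) \<in> C) + of_bool (V i \<in> C)"
proof -
  have "(if U i \<in> C then int a else int b) = int (card {y \<in> C. gp_adj n k (U i) y})"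
    using assms(1,3) by (auto simp: regular_set_def gp_verts_def)
  also have "{y \<in> C. gp_adj n k (U i) y} = {U ((i + 1) mod n), U ((i + (n - 1)) mod n), V i} \<inter> C"
    using gp_adj_U_iff[of n i k] assms(2,3) by auto
  also have "int (card \<dots>) = of_bool (U ((i + 1) mod n) \<in> C) + of_bool (U ((i + (n - 1)) mod n) \<in> C) + of_bool (V i \<in> C)"
    using mod_shift_neq_opposite[of i n 1] assms(2,3) by (intro card_three_Int) auto
  finally show ?thesis .
qed

lemma regular_set_neighbours_V:
  assumes "regular_set n k a b C" "0 < k" "k < n" "(2 * k) mod n \<noteq> 0" "i < n"
  shows "(if V i \<in> C then int a else int b)
           = of_bool (V ((i + k) mod n) \<in> C) + of_bool (V ((i + (n - k)) mod n) \<in> C) + of_bool (U i \<in> C)"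
proof -
  have "(if V i \<in> C then int a else int b) = int (card {y \<in> C. gp_adj n k (V i) y})"
    using assms(1,5) by (auto simp: regular_set_def gp_verts_def)
  also have "{y \<in> C. gp_adj n k (V i) y} = {V ((i + k) mod n), V ((i + (n - k)) mod n), U i} \<inter> C"
    using gp_adj_V_iff[of k n i] assms(2,3,5) by auto
  also have "int (card \<dots>) = of_bool (V ((i + k) mod n) \<in> C) + of_bool (V ((i + (n - k)) mod n) \<in> C) + of_bool (U i \<in> C)"
    using mod_shift_neq_opposite[of i n k] assms(3-5) by (intro card_three_Int) auto
  finally show ?thesis .
qed

text \<open>P marks the vertices of C on a rim of GP(n,k), a cycle with step c, and Q those on the
  other rim; the hypothesis is the (a,b)-regularity condition at the rim vertex i.\<close>

lemma cycle_double_count: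
  fixes P Q :: "nat \<Rightarrow> bool" and a b :: int and c n :: nat
  assumes "c \<le> n"
    and count: "\<And>i. i < n \<Longrightarrow> (if P i then a else b)
                  = of_bool (P ((i + c) mod n)) + of_bool (P ((i + (n - c)) mod n)) + of_bool (Q i)"
  shows "a * (\<Sum>i<n. of_bool (P i)) + b * (int n - (\<Sum>i<n. of_bool (P i)))
           = 2 * (\<Sum>i<n. of_bool (P i)) + (\<Sum>i<n. of_bool (Q i))"
    and "a * (\<Sum>i<n. of_bool (P i))
           = 2 * (\<Sum>i<n. of_bool (P i \<and> P ((i + c) mod n))) + (\<Sum>i<n. of_bool (P i \<and> Q i))"
proof -
  define f :: "nat \<Rightarrow> int" where "f = (\<lambda>i. of_bool (P i))"
  define g :: "nat \<Rightarrow> int" where "g = (\<lambda>i. of_bool (Q i))"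
  have count': "(if P i then a else b) = f ((i + c) mod n) + f ((i + (n - c)) mod n) + g i"
    if "i < n" for i
    using count[OF that] by (simp add: f_def g_def)
  have "a * sum f {..<n} + b * (int n - sum f {..<n}) = (\<Sum>i<n. a * f i + b * (1 - f i))"
    by (simp add: sum.distrib sum_subtractf sum_distrib_left[symmetric])
  also have "\<dots> = (\<Sum>i<n. if P i then a else b)"
    by (intro sum.cong) (auto simp: f_def)
  also have "\<dots> = (\<Sum>i<n. f ((i + c) mod n) + f ((i + (n - c)) mod n) + g i)"
    using count' by (intro sum.cong) auto
  also have "\<dots> = 2 * sum f {..<n} + sum g {..<n}"
    by (simp only: sum.distrib sum_mod_shift[OF assms(1)] sum_mod_shift[OF diff_le_self] mult_2)
  finally show "a * (\<Sum>i<n. of_bool (P i)) + b * (int n - (\<Sum>i<n. of_bool (P i)))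
      = 2 * (\<Sum>i<n. of_bool (P i)) + (\<Sum>i<n. of_bool (Q i))"
    unfolding f_def g_def .
  have "(\<Sum>i<n. f i * f ((i + (n - c)) mod n))
          = (\<Sum>i<n. f ((i + c) mod n) * f (((i + c) mod n + (n - c)) mod n))"
    using sum_mod_shift[OF assms(1), of "\<lambda>j. f j * f ((j + (n - c)) mod n)"] by simp
  also have "\<dots> = (\<Sum>i<n. f i * f ((i + c) mod n))"
    using mod_add_sub_cancel[OF assms(1)] by (intro sum.cong) (auto simp: mult.commute)
  finally have reversed: "(\<Sum>i<n. f i * f ((i + (n - c)) mod n)) = (\<Sum>i<n. f i * f ((i + c) mod n))" .
  have "a * sum f {..<n} = (\<Sum>i<n. f i * (if P i then a else b))"
    by (simp add: f_def sum_distrib_left)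
  also have "\<dots> = (\<Sum>i<n. f i * f ((i + c) mod n) + f i * f ((i + (n - c)) mod n) + f i * g i)"
    using count' by (intro sum.cong) (auto simp: algebra_simps)
  also have "\<dots> = 2 * (\<Sum>i<n. f i * f ((i + c) mod n)) + (\<Sum>i<n. f i * g i)"
    by (simp add: sum.distrib reversed)
  finally show "a * (\<Sum>i<n. of_bool (P i))
      = 2 * (\<Sum>i<n. of_bool (P i \<and> P ((i + c) mod n))) + (\<Sum>i<n. of_bool (P i \<and> Q i))"
    unfolding f_def g_def of_bool_conj .
qed

lemma inj_on_cycle_edges:
  fixes c n :: nat
  assumes "inj F" "c < n" "(2 * c) mod n \<noteq> 0"
  shows "inj_on (\<lambda>i. {F i, F ((i + c) mod n)}) {..<n}"
proof (rule inj_onI)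
  fix i j assume ij: "i \<in> {..<n}" "j \<in> {..<n}"
    and eq: "{F i, F ((i + c) mod n)} = {F j, F ((j + c) mod n)}"
  show "i = j"
  proof (rule ccontr)
    assume "i \<noteq> j"
    then have "j = (i + c) mod n" "i = (j + c) mod n"
      using eq by (auto simp: doubleton_eq_iff inj_eq[OF assms(1)])
    then have "(i + c) mod n = (i + (n - c)) mod n"
      using mod_shift_eq_iff[of c n i j] ij assms(2) by auto
    then show False using mod_shift_neq_opposite[of i n c] ij assms(2,3) by simp
  qed
qed

lemma edges_in_eq: "edges_in n k A = {e \<in> gp_edges n k. e \<subseteq> A}"
proof -
  have "(\<exists>x y. e = {x, y} \<and> x \<in> A \<and> y \<in> A) \<longleftrightarrow> e \<subseteq> A" if edge: "e \<in> gp_edges n k" for e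
  proof -
    obtain a b where "e = {a, b}" using edge unfolding gp_edges_def by blast
    then show ?thesis by blast
  qed
  then show ?thesis unfolding edges_in_def edges_between_def by blast
qed

lemma edges_in_outer: "edges_in n k (outer n) = (\<lambda>i. {U i, U ((i + 1) mod n)}) ` {..<n}"
  unfolding edges_in_eq gp_edges_def outer_def atLeast0LessThan by auto

lemma edges_in_inner: "edges_in n k (inner n) = (\<lambda>i. {V i, V ((i + k) mod n)}) ` {..<n}"
  unfolding edges_in_eq gp_edges_def inner_def atLeast0LessThan by auto

lemma edges_between_outer_inner:
  "edges_between n k (outer n) (inner n) = (\<lambda>i. {U i, V i}) ` {..<n}"
  unfolding edges_between_def gp_edges_def outer_def inner_def atLeast0LessThan by auto

lemma card_edges_in_Int_image:
  assumes "inj_on f {..<n}" "f ` {..<n} \<subseteq> gp_edges n k"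
  shows "int (card (edges_in n k C \<inter> f ` {..<n})) = (\<Sum>i<n. of_bool (f i \<subseteq> C))"
proof -
  have "edges_in n k C \<inter> f ` {..<n} = f ` ({..<n} \<inter> {i. f i \<subseteq> C})"
    using assms(2) unfolding edges_in_eq by blast
  moreover have "inj_on f ({..<n} \<inter> {i. f i \<subseteq> C})"
    using assms(1) by (rule inj_on_subset) blast
  ultimately show ?thesis by (simp add: card_image)
qed

lemma card_edges_in_outer:
  assumes "3 \<le> n"
  shows "int (card (edges_in n k C \<inter> edges_in n k (outer n)))
           = (\<Sum>i<n. of_bool (U i \<in> C \<and> U ((i + 1) mod n) \<in> C))"
proof -
  have "inj_on (\<lambda>i. {U i, U ((i + 1) mod n)}) {..<n}"
    using assms by (intro inj_on_cycle_edges) (auto simp: inj_def)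
  moreover have "edges_in n k (outer n) \<subseteq> gp_edges n k" by (simp add: edges_in_eq)
  ultimately show ?thesis unfolding edges_in_outer by (simp add: card_edges_in_Int_image)
qed

lemma card_edges_in_inner:
  assumes "k < n" "(2 * k) mod n \<noteq> 0"
  shows "int (card (edges_in n k C \<inter> edges_in n k (inner n)))
           = (\<Sum>i<n. of_bool (V i \<in> C \<and> V ((i + k) mod n) \<in> C))"
proof -
  have "inj_on (\<lambda>i. {V i, V ((i + k) mod n)}) {..<n}"
    using assms by (intro inj_on_cycle_edges) (auto simp: inj_def)
  moreover have "edges_in n k (inner n) \<subseteq> gp_edges n k" by (simp add: edges_in_eq)
  ultimately show ?thesis unfolding edges_in_inner by (simp add: card_edges_in_Int_image)
qed

lemma card_edges_in_spokes:
  "int (card (edges_in n k C \<inter> edges_between n k (outer n) (inner n)))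
     = (\<Sum>i<n. of_bool (U i \<in> C \<and> V i \<in> C))"
proof -
  have "inj_on (\<lambda>i. {U i, V i}) {..<n}"
    by (rule inj_onI) (simp add: doubleton_eq_iff)
  moreover have "edges_between n k (outer n) (inner n) \<subseteq> gp_edges n k"
    by (simp add: edges_between_def)
  ultimately show ?thesis unfolding edges_between_outer_inner by (simp add: card_edges_in_Int_image)
qed

theorem lemma4p1:
  fixes n k b :: nat and C :: "gpv set"
  assumes "n \<ge> 3" and "0 < k" and "k < n" and "(2 * k) mod n \<noteq> 0"
    and "b \<in> {1, 2, 3}"
    and "regular_set n k 1 b C"
  shows "card (edges_in n k C \<inter> edges_in n k (outer n))
           = card (edges_in n k C \<inter> edges_in n k (inner n))
       \<and> real (2 * card (edges_in n k C \<inter> edges_in n k (outer n))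
           + card (edges_in n k C \<inter> edges_between n k (outer n) (inner n)))
           = real b * real n / (2 + real b)"
proof -
  define A :: int where "A = (\<Sum>i<n. of_bool (U i \<in> C))"
  define B :: int where "B = (\<Sum>i<n. of_bool (V i \<in> C))"
  define X where "X = card (edges_in n k C \<inter> edges_in n k (outer n))"
  define Y where "Y = card (edges_in n k C \<inter> edges_in n k (inner n))"
  define Z where "Z = card (edges_in n k C \<inter> edges_between n k (outer n) (inner n))"
  note outer = cycle_double_count[where P = "\<lambda>i. U i \<in> C" and Q = "\<lambda>i. V i \<in> C" and c = 1,
      OF _ regular_set_neighbours_U[OF assms(6,1)]]
  note inner = cycle_double_count[where P = "\<lambda>i. V i \<in> C" and Q = "\<lambda>i. U i \<in> C" and c = k,
      OF _ regular_set_neighbours_V[OF assms(6,2-4)]]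
  have balance: "A + int b * (int n - A) = 2 * A + B" "B + int b * (int n - B) = 2 * B + A"
    using outer(1) inner(1) assms(1,3) unfolding A_def B_def by simp_all
  have degrees: "A = 2 * int X + int Z" "B = 2 * int Y + int Z"
    using outer(2) inner(2) assms(1,3)
      card_edges_in_outer[OF assms(1)] card_edges_in_inner[OF assms(3,4)] card_edges_in_spokes
    unfolding A_def B_def X_def Y_def Z_def by (simp_all add: conj_commute)
  have "int b * (A - B) = 0" using balance by (simp add: algebra_simps)
  then have "A = B" using assms(5) by auto
  then have "X = Y" using degrees by simp
  have "int b * int n = (2 + int b) * (2 * int X + int Z)"
    using balance(1) \<open>A = B\<close> degrees(1) by (simp add: algebra_simps)
  then have "real_of_int (int b * int n) = real_of_int ((2 + int b) * (2 * int X + int Z))"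
    by (rule arg_cong)
  then have "real (2 * X + Z) = real b * real n / (2 + real b)"
    by (simp add: eq_divide_eq)
  with \<open>X = Y\<close> show ?thesis unfolding X_def Y_def Z_def by simp
qed

end
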